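(* Let $G$ be a countable discrete group and $\sigma: G\curvearrowright(X,\nu)$ a p.m.p. action on a standard probability space. For every natural number $n$ the map $\Psi_n: H^n(G,\mathbb{T})\to H^n(G\curvearrowright X;\mathbb{T})$, $\Psi_n([c])=[c']$ with $c'(g_1,\dots,g_n,x)=c(g_1,\dots,g_n)$, is a well-defined group homomorphism. Moreover: (i) if $\sigma$ is weakly mixing then $\Psi_1$ is injective; (ii) if the diagonal action $\sigma^2:G\curvearrowright(X^2,\nu^2)$ is weakly mixing and $\mathbb{T}$-cocycle superrigid, then $\Psi_2$ is injective.
   Context: $\mathbb{T}$ is the unit circle with trivial $G$-action; $H^n(G,\mathbb{T})$ is group cohomology via inhomogeneous cochains. For a p.m.p. action, a measurable $c:G^n\times X\to\mathbb{T}$ is an $n$-cocycle if for all $g_1,\dots,g_{n+1}$ and a.e. $x$: $c(g_2,\dots,g_{n+1},g_1^{-1}x)\prod_{i=1}^n c(g_1,\dots,g_ig_{i+1},\dots,g_{n+1},x)^{(-1)^i}\cdot c(g_1,\dots,g_n,x)^{(-1)^{n+1}}=1$; $c_1,c_2$ are cohomologous if for some measurable $b:G^{n-1}\times X\to\mathbb{T}$, for all $g_i$ and a.e. $x$, $c_1(g_1,\dots,g_n,x)\,b(g_2,\dots,g_n,g_1^{-1}x)\prod_{i=1}^{n-1}b(g_1,\dots,g_ig_{i+1},\dots,g_n,x)^{(-1)^i}\cdot b(g_1,\dots,g_{n-1},x)^{(-1)^n}=c_2(g_1,\dots,g_n,x)$; $H^n(G\curvearrowright X;\mathbb{T})$ is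 cocycles modulo those cohomologous to $1$. Weakly mixing: the diagonal action on the product of two copies is ergodic. A free ergodic p.m.p. action $G\curvearrowright(Y,\eta)$ is $\mathbb{T}$-cocycle superrigid if every measurable $c:G\times Y\to\mathbb{T}$ with $c(gh,y)=c(g,y)c(h,g^{-1}y)$ a.e. is of the form $c(g,y)=\lambda(g)b(y)b(g^{-1}y)^{-1}$ a.e. for some homomorphism $\lambda:G\to\mathbb{T}$ and measurable $b:Y\to\mathbb{T}$. *)

theory Defs
  imports "HOL-Probability.Probability" "HOL-Algebra.Group" "HOL-Algebra.Coset"
begin

definition gtuples :: "('g,'b) monoid_scheme \<Rightarrow> nat \<Rightarrow> 'g list set" where
  "gtuples G n = {gs. length gs = n \<and> set gs \<subseteq> carrier G}"

text \<open>For gs = (g_1,...,g_{m}) and 1 \<le> i < m: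
  (g_1,...,g_i g_{i+1},...,g_m).\<close>
definition merge_at :: "('g,'b) monoid_scheme \<Rightarrow> nat \<Rightarrow> 'g list \<Rightarrow> 'g list" where
  "merge_at G i gs = take (i - 1) gs @ ((gs ! (i - 1)) \<otimes>\<^bsub>G\<^esub> (gs ! i)) # drop (i + 1) gs"

definition dG :: "('g,'b) monoid_scheme \<Rightarrow> ('g list \<Rightarrow> complex) \<Rightarrow> 'g list \<Rightarrow> complex" where
  "dG G f gs = (let n = length gs - 1 in
     f (tl gs) * (\<Prod>i=1..n. f (merge_at G i gs) powi ((-1)^i))
       * f (butlast gs) powi ((-1)^(n+1)))"

definition Zg :: "('g,'b) monoid_scheme \<Rightarrow> nat \<Rightarrow> ('g list \<Rightarrow> complex) set" where
  "Zg G n = {c. (\<forall>gs\<in>gtuples G n. cmod (c gs) = 1) \<and>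
                (\<forall>gs\<in>gtuples G (Suc n). dG G c gs = 1)}"

text \<open>Coboundaries; in degree 0 the group of coboundaries is trivial (convention).\<close>
definition Bg :: "('g,'b) monoid_scheme \<Rightarrow> nat \<Rightarrow> ('g list \<Rightarrow> complex) set" where
  "Bg G n = {c \<in> Zg G n.
     (if n = 0 then (\<forall>gs\<in>gtuples G 0. c gs = 1)
      else (\<exists>b. (\<forall>gs\<in>gtuples G (n - 1). cmod (b gs) = 1) \<and>
                (\<forall>gs\<in>gtuples G n. c gs = dG G b gs)))}"

definition Zgrp :: "('g,'b) monoid_scheme \<Rightarrow> nat \<Rightarrow> ('g list \<Rightarrow> complex) monoid" where
  "Zgrp G n = \<lparr>carrier = Zg G n, mult = (\<lambda>f h gs. f gs * h gs), one = (\<lambda>_. 1)\<rparr>"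

definition Hgrp :: "('g,'b) monoid_scheme \<Rightarrow> nat \<Rightarrow> ('g list \<Rightarrow> complex) set monoid" where
  "Hgrp G n = Zgrp G n Mod Bg G n"

definition Hclass :: "('g,'b) monoid_scheme \<Rightarrow> nat \<Rightarrow> ('g list \<Rightarrow> complex) \<Rightarrow> ('g list \<Rightarrow> complex) set" where
  "Hclass G n c = Bg G n #>\<^bsub>Zgrp G n\<^esub> c"

definition pmp_action :: "('g,'b) monoid_scheme \<Rightarrow> 'x measure \<Rightarrow> ('g \<Rightarrow> 'x \<Rightarrow> 'x) \<Rightarrow> bool" where
  "pmp_action G M \<sigma> \<longleftrightarrow> prob_space M \<and>
     (\<forall>g\<in>carrier G. \<sigma> g \<in> M \<rightarrow>\<^sub>M M \<and> distr M M (\<sigma> g) = M) \<and>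
     (\<forall>x\<in>space M. \<sigma> \<one>\<^bsub>G\<^esub> x = x) \<and>
     (\<forall>g\<in>carrier G. \<forall>h\<in>carrier G. \<forall>x\<in>space M. \<sigma> (g \<otimes>\<^bsub>G\<^esub> h) x = \<sigma> g (\<sigma> h x))"

definition ergodic_action :: "('g,'b) monoid_scheme \<Rightarrow> 'x measure \<Rightarrow> ('g \<Rightarrow> 'x \<Rightarrow> 'x) \<Rightarrow> bool" where
  "ergodic_action G M \<sigma> \<longleftrightarrow>
     (\<forall>A\<in>sets M. (\<forall>g\<in>carrier G. \<sigma> g -` A \<inter> space M = A) \<longrightarrow>
        measure M A = 0 \<or> measure M A = 1)"

definition diag_action :: "('g \<Rightarrow> 'x \<Rightarrow> 'x) \<Rightarrow> 'g \<Rightarrow> 'x \<times> 'x \<Rightarrow> 'x \<times> 'x" where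
  "diag_action \<sigma> g = (\<lambda>(x, y). (\<sigma> g x, \<sigma> g y))"

definition weakly_mixing :: "('g,'b) monoid_scheme \<Rightarrow> 'x measure \<Rightarrow> ('g \<Rightarrow> 'x \<Rightarrow> 'x) \<Rightarrow> bool" where
  "weakly_mixing G M \<sigma> \<longleftrightarrow> ergodic_action G (M \<Otimes>\<^sub>M M) (diag_action \<sigma>)"

definition free_action :: "('g,'b) monoid_scheme \<Rightarrow> 'x measure \<Rightarrow> ('g \<Rightarrow> 'x \<Rightarrow> 'x) \<Rightarrow> bool" where
  "free_action G M \<sigma> \<longleftrightarrow> (\<forall>g\<in>carrier G - {\<one>\<^bsub>G\<^esub>}. AE x in M. \<sigma> g x \<noteq> x)"

definition T_cocycle_superrigid :: "('g,'b) monoid_scheme \<Rightarrow> 'x measure \<Rightarrow> ('g \<Rightarrow> 'x \<Rightarrow> 'x) \<Rightarrow> bool" where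
  "T_cocycle_superrigid G M \<sigma> \<longleftrightarrow>
     free_action G M \<sigma> \<and> ergodic_action G M \<sigma> \<and> pmp_action G M \<sigma> \<and>
     (\<forall>c :: 'g \<Rightarrow> 'x \<Rightarrow> complex.
        (\<forall>g\<in>carrier G. c g \<in> borel_measurable M \<and> (\<forall>y\<in>space M. cmod (c g y) = 1)) \<and>
        (\<forall>g\<in>carrier G. \<forall>h\<in>carrier G. AE y in M.
            c (g \<otimes>\<^bsub>G\<^esub> h) y = c g y * c h (\<sigma> (inv\<^bsub>G\<^esub> g) y))
        \<longrightarrow> (\<exists>(hom_chr::'g \<Rightarrow> complex) (b::'x \<Rightarrow> complex).
              (\<forall>g\<in>carrier G. cmod (hom_chr g) = 1) \<and>
              (\<forall>g\<in>carrier G. \<forall>h\<in>carrier G. hom_chr (g \<otimes>\<^bsub>G\<^esub> h) = hom_chr g * hom_chr h) \<and>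
              b \<in> borel_measurable M \<and> (\<forall>y\<in>space M. cmod (b y) = 1) \<and>
              (\<forall>g\<in>carrier G. AE y in M. c g y = hom_chr g * b y / b (\<sigma> (inv\<^bsub>G\<^esub> g) y))))"

text \<open>Coboundary operator on measurable cochains; (g_1^{-1} x) is sigma (inv g_1) x.\<close>
definition dA :: "('g,'b) monoid_scheme \<Rightarrow> ('g \<Rightarrow> 'x \<Rightarrow> 'x) \<Rightarrow> ('g list \<Rightarrow> 'x \<Rightarrow> complex)
                 \<Rightarrow> 'g list \<Rightarrow> 'x \<Rightarrow> complex" where
  "dA G \<sigma> c gs x = (let n = length gs - 1 in
     c (tl gs) (\<sigma> (inv\<^bsub>G\<^esub> (hd gs)) x) * (\<Prod>i=1..n. c (merge_at G i gs) x powi ((-1)^i))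
       * c (butlast gs) x powi ((-1)^(n+1)))"

text \<open>Measurable T-valued n-cochains (G countable discrete: measurability on G^n x X
  amounts to measurability of each section).\<close>
definition meas_cochain :: "('g,'b) monoid_scheme \<Rightarrow> 'x measure \<Rightarrow> nat \<Rightarrow> ('g list \<Rightarrow> 'x \<Rightarrow> complex) \<Rightarrow> bool" where
  "meas_cochain G M n c \<longleftrightarrow>
     (\<forall>gs\<in>gtuples G n. c gs \<in> borel_measurable M \<and> (\<forall>x\<in>space M. cmod (c gs x) = 1))"

definition Za :: "('g,'b) monoid_scheme \<Rightarrow> 'x measure \<Rightarrow> ('g \<Rightarrow> 'x \<Rightarrow> 'x) \<Rightarrow> nat
                   \<Rightarrow> ('g list \<Rightarrow> 'x \<Rightarrow> complex) set" where
  "Za G M \<sigma> n = {c. meas_cochain G M n c \<and>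
      (\<forall>gs\<in>gtuples G (Suc n). AE x in M. dA G \<sigma> c gs x = 1)}"

text \<open>In degree 0 (no (-1)-cochains) "cohomologous" means equal a.e. (convention).\<close>
definition cohomologous :: "('g,'b) monoid_scheme \<Rightarrow> 'x measure \<Rightarrow> ('g \<Rightarrow> 'x \<Rightarrow> 'x) \<Rightarrow> nat
     \<Rightarrow> ('g list \<Rightarrow> 'x \<Rightarrow> complex) \<Rightarrow> ('g list \<Rightarrow> 'x \<Rightarrow> complex) \<Rightarrow> bool" where
  "cohomologous G M \<sigma> n c1 c2 \<longleftrightarrow>
     (if n = 0 then (\<forall>gs\<in>gtuples G 0. AE x in M. c1 gs x = c2 gs x)
      else (\<exists>b. meas_cochain G M (n - 1) b \<and>
              (\<forall>gs\<in>gtuples G n. AE x in M. c1 gs x * dA G \<sigma> b gs x = c2 gs x)))"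

definition Ba :: "('g,'b) monoid_scheme \<Rightarrow> 'x measure \<Rightarrow> ('g \<Rightarrow> 'x \<Rightarrow> 'x) \<Rightarrow> nat
                   \<Rightarrow> ('g list \<Rightarrow> 'x \<Rightarrow> complex) set" where
  "Ba G M \<sigma> n = {c \<in> Za G M \<sigma> n. cohomologous G M \<sigma> n c (\<lambda>_ _. 1)}"

definition Zagrp :: "('g,'b) monoid_scheme \<Rightarrow> 'x measure \<Rightarrow> ('g \<Rightarrow> 'x \<Rightarrow> 'x) \<Rightarrow> nat
                   \<Rightarrow> ('g list \<Rightarrow> 'x \<Rightarrow> complex) monoid" where
  "Zagrp G M \<sigma> n = \<lparr>carrier = Za G M \<sigma> n, mult = (\<lambda>f h gs x. f gs x * h gs x),
                     one = (\<lambda>_ _. 1)\<rparr>"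

definition Hact :: "('g,'b) monoid_scheme \<Rightarrow> 'x measure \<Rightarrow> ('g \<Rightarrow> 'x \<Rightarrow> 'x) \<Rightarrow> nat
                   \<Rightarrow> ('g list \<Rightarrow> 'x \<Rightarrow> complex) set monoid" where
  "Hact G M \<sigma> n = Zagrp G M \<sigma> n Mod Ba G M \<sigma> n"

definition Haclass :: "('g,'b) monoid_scheme \<Rightarrow> 'x measure \<Rightarrow> ('g \<Rightarrow> 'x \<Rightarrow> 'x) \<Rightarrow> nat
                   \<Rightarrow> ('g list \<Rightarrow> 'x \<Rightarrow> complex) \<Rightarrow> ('g list \<Rightarrow> 'x \<Rightarrow> complex) set" where
  "Haclass G M \<sigma> n c = Ba G M \<sigma> n #>\<^bsub>Zagrp G M \<sigma> n\<^esub> c"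

end

theory Submission
  imports Defs
begin

text \<open>
  Psi_n sends the class of c to the class of c viewed as a cochain that does not depend on x;
  the coboundary of such a cochain is again independent of x, so cocycles, coboundaries and
  products are respected. Injectivity amounts to showing that a cocycle c on G which becomes a
  coboundary d b over X is already a coboundary over G.

  In degree 1, b is a function f on X with f(h x) = lambda(h) f(x). Then f(x)/f(y) is invariant
  under the diagonal action on X^2, hence constant by weak mixing; so f is constant and c = 1.

  In degree 2, b is a family of functions B_g with B_gh = c(g,h) (B_h o g^-1) B_g. The ratios
  B_g(x)/B_g(y) form a T-valued cocycle of the diagonal action on X^2, which by superrigidity is a
  character times the coboundary of a function F on X^2. The cross ratio
  F(x,y) F(z,t) / (F(x,t) F(z,y)) is invariant under the diagonal action on X^4, hence constant by
  weak mixing of the diagonal action, so F(x,y) = k_1(x) k_2(y) almost everywhere. Separating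
  variables then shows that each B_g is a constant mu(g) times the coboundary of k_1, and the
  cocycle identity gives c(g,h) = mu(gh) / (mu(g) mu(h)).
\<close>

section \<open>Almost-everywhere statements on products\<close>

lemma (in prob_space) AE_imp_ex_in_space:
  assumes "AE x in M. P x"
  shows "\<exists>x\<in>space M. P x"
proof -
  have "AE x in M. \<exists>x\<in>space M. P x"
    using assms AE_space by eventually_elim blast
  then show ?thesis by simp
qed

lemma AE_measure_preserving:
  assumes "f \<in> M \<rightarrow>\<^sub>M N" and "distr M N f = N" and "AE y in N. P y"
  shows "AE x in M. P (f x)"
proof -
  from assms(3) have "AE y in distr M N f. P y" by (subst assms(2))
  then show ?thesis by (rule AE_distrD[OF assms(1)])
qed

lemma distr_pair_snd:
  assumes "prob_space N" and "sigma_finite_measure M"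
  shows "distr (N \<Otimes>\<^sub>M M) M snd = M"
proof (intro measure_eqI)
  fix A assume A: "A \<in> sets (distr (N \<Otimes>\<^sub>M M) M snd)"
  then have "emeasure (distr (N \<Otimes>\<^sub>M M) M snd) A = emeasure (N \<Otimes>\<^sub>M M) (space N \<times> A)"
    by (auto simp: emeasure_distr space_pair_measure dest: sets.sets_into_space
        intro!: arg_cong2[where f=emeasure])
  with A show "emeasure (distr (N \<Otimes>\<^sub>M M) M snd) A = emeasure M A"
    by (simp add: sigma_finite_measure.emeasure_pair_measure_Times[OF assms(2)]
        prob_space.emeasure_space_1[OF assms(1)])
qed simp

lemma AE_pair_fst:
  assumes "prob_space M2" and "AE x in M1. P x"
  shows "AE p in M1 \<Otimes>\<^sub>M M2. P (fst p)"
  using AE_measure_preserving[OF measurable_fst prob_space.distr_pair_fst[OF assms(1)] assms(2)] .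

lemma AE_pair_snd:
  assumes "prob_space M1" and "sigma_finite_measure M2" and "AE y in M2. P y"
  shows "AE p in M1 \<Otimes>\<^sub>M M2. P (snd p)"
  using AE_measure_preserving[OF measurable_snd distr_pair_snd[OF assms(1,2)] assms(3)] .

lemma AE_pair_cross:
  assumes M1: "prob_space M1" and M2: "prob_space M2" and ae: "AE p in M1 \<Otimes>\<^sub>M M2. Q p"
  shows "AE P in (M1 \<Otimes>\<^sub>M M2) \<Otimes>\<^sub>M (M1 \<Otimes>\<^sub>M M2). Q (fst (fst P), snd (snd P))"
proof -
  have sf: "sigma_finite_measure M2"
    using M2 by (rule prob_space_imp_sigma_finite)
  have "distr ((M1 \<Otimes>\<^sub>M M2) \<Otimes>\<^sub>M (M1 \<Otimes>\<^sub>M M2)) (M1 \<Otimes>\<^sub>M M2) (\<lambda>(p, q). (fst p, snd q))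
      = distr (M1 \<Otimes>\<^sub>M M2) M1 fst \<Otimes>\<^sub>M distr (M1 \<Otimes>\<^sub>M M2) M2 snd"
    by (rule pair_measure_distr[symmetric]) (simp_all add: distr_pair_snd[OF M1 sf] sf)
  also have "\<dots> = M1 \<Otimes>\<^sub>M M2"
    by (simp add: prob_space.distr_pair_fst[OF M2] distr_pair_snd[OF M1 sf])
  finally have "AE P in (M1 \<Otimes>\<^sub>M M2) \<Otimes>\<^sub>M (M1 \<Otimes>\<^sub>M M2). Q ((\<lambda>(p, q). (fst p, snd q)) P)"
    by (intro AE_measure_preserving[OF _ _ ae]) measurable
  then show ?thesis by (simp add: case_prod_beta)
qed

lemma AE_pair_cross_swap:
  assumes M1: "prob_space M1" and M2: "prob_space M2" and ae: "AE p in M1 \<Otimes>\<^sub>M M2. Q p"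
  shows "AE P in (M1 \<Otimes>\<^sub>M M2) \<Otimes>\<^sub>M (M1 \<Otimes>\<^sub>M M2). Q (fst (snd P), snd (fst P))"
proof -
  interpret P: prob_space "M1 \<Otimes>\<^sub>M M2" using M1 M2 by (rule prob_space_pair)
  interpret pair_sigma_finite "M1 \<Otimes>\<^sub>M M2" "M1 \<Otimes>\<^sub>M M2" ..
  have "AE P in (M1 \<Otimes>\<^sub>M M2) \<Otimes>\<^sub>M (M1 \<Otimes>\<^sub>M M2).
      Q (fst (fst ((\<lambda>(x, y). (y, x)) P)), snd (snd ((\<lambda>(x, y). (y, x)) P)))"
    by (rule AE_measure_preserving[OF measurable_pair_swap' distr_pair_swap[symmetric]
          AE_pair_cross[OF M1 M2 ae]])
  then show ?thesis by (simp add: case_prod_beta)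
qed

lemma AE_pair_separated_const:
  fixes u :: "'a \<Rightarrow> complex" and v :: "'b \<Rightarrow> complex"
  assumes M1: "prob_space M1" and M2: "prob_space M2"
    and [measurable]: "u \<in> borel_measurable M1" "v \<in> borel_measurable M2"
    and ae: "AE p in M1 \<Otimes>\<^sub>M M2. u (fst p) = v (snd p)"
  shows "\<exists>y\<in>space M2. AE x in M1. u x = v y"
proof -
  interpret M1: prob_space M1 by fact
  interpret M2: prob_space M2 by fact
  interpret pair_sigma_finite M1 M2 ..
  have "AE x in M1. AE y in M2. u x = v y" using AE_pair[OF ae] by simp
  then have "AE y in M2. AE x in M1. u x = v y" by (subst (asm) AE_commute) measurable
  then show ?thesis by (rule M2.AE_imp_ex_in_space)
qed

lemma AE_const_if_zero_one_law:
  fixes F :: "'y \<Rightarrow> complex"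
  assumes N: "prob_space N" and [measurable]: "F \<in> borel_measurable N"
    and zero_one: "\<And>A. A \<in> sets borel \<Longrightarrow>
      measure N {p\<in>space N. F p \<in> A} = 0 \<or> measure N {p\<in>space N. F p \<in> A} = 1"
  shows "\<exists>\<kappa>. AE p in N. F p = \<kappa>"
proof -
  interpret prob_space N by fact
  obtain B :: "complex set set" where "countable B" and B_open: "\<And>C. C \<in> B \<Longrightarrow> open C"
    and B_basis: "\<And>S. open S \<Longrightarrow> \<exists>U. U \<subseteq> B \<and> S = \<Union>U"
    by (rule univ_second_countable) blast
  define pr where "pr A = prob {p\<in>space N. F p \<in> A}" for A
  have pre_sets: "{p\<in>space N. F p \<in> A} \<in> events" if "A \<in> sets borel" for A
    using that by measurable
  define Z where "Z = {C\<in>B. pr C = 0}"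
  have "AE p in N. \<forall>C\<in>Z. F p \<notin> C"
  proof (subst AE_ball_countable)
    show "countable Z" using \<open>countable B\<close> by (auto simp: Z_def intro: countable_subset)
    show "\<forall>C\<in>Z. AE p in N. F p \<notin> C"
    proof
      fix C assume C: "C \<in> Z"
      then have "C \<in> sets borel" using B_open by (auto simp: Z_def)
      with C show "AE p in N. F p \<notin> C"
        using AE_iff_measurable[OF pre_sets, of C "\<lambda>p. F p \<notin> C"]
        by (auto simp: Z_def pr_def emeasure_eq_measure)
    qed
  qed
  then obtain p0 where p0: "p0 \<in> space N" "\<forall>C\<in>Z. F p0 \<notin> C"
    by (blast dest: AE_imp_ex_in_space)
  have pr_1: "pr C = 1" if "C \<in> B" "z \<in> C" "\<forall>C\<in>Z. z \<notin> C" for C z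
    using that zero_one[of C] B_open[of C] by (auto simp: Z_def pr_def)
  \<comment> \<open>Every value avoiding the null basic sets lies in a basic set of full measure, and two
    such sets cannot be disjoint; so there is only one such value.\<close>
  have "z = F p0" if z: "\<forall>C\<in>Z. z \<notin> C" for z
  proof (rule ccontr)
    assume "z \<noteq> F p0"
    then obtain O1 O2 where O: "open O1" "open O2" "F p0 \<in> O1" "z \<in> O2" "O1 \<inter> O2 = {}"
      using separation_t2 by metis
    obtain C1 where C1: "C1 \<in> B" "C1 \<subseteq> O1" "F p0 \<in> C1" using B_basis[OF O(1)] O(3) by blast
    obtain C2 where C2: "C2 \<in> B" "C2 \<subseteq> O2" "z \<in> C2" using B_basis[OF O(2)] O(4) by blast
    have "C1 \<in> sets borel" "C2 \<in> sets borel" using C1 C2 B_open by auto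
    then have "pr (C1 \<union> C2) = pr C1 + pr C2"
      unfolding pr_def using C1 C2 O(5) pre_sets
      by (subst finite_measure_Union[symmetric]) (auto intro!: arg_cong[where f="measure N"])
    moreover have "pr (C1 \<union> C2) \<le> 1" unfolding pr_def by (rule prob_le_1)
    ultimately show False using pr_1[OF C1(1,3) p0(2)] pr_1[OF C2(1,3) z] by simp
  qed
  note unique = this
  from \<open>AE p in N. \<forall>C\<in>Z. F p \<notin> C\<close> have "AE p in N. F p = F p0"
    by eventually_elim (rule unique)
  then show ?thesis ..
qed

section \<open>Ergodic and weakly mixing actions\<close>

lemma pmp_actionD:
  assumes "pmp_action G M \<sigma>"
  shows "prob_space M" and "\<And>g. g \<in> carrier G \<Longrightarrow> \<sigma> g \<in> M \<rightarrow>\<^sub>M M"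
    and "\<And>g. g \<in> carrier G \<Longrightarrow> distr M M (\<sigma> g) = M"
    and "\<And>x. x \<in> space M \<Longrightarrow> \<sigma> \<one>\<^bsub>G\<^esub> x = x"
    and "\<And>g h x. g \<in> carrier G \<Longrightarrow> h \<in> carrier G \<Longrightarrow> x \<in> space M \<Longrightarrow>
      \<sigma> (g \<otimes>\<^bsub>G\<^esub> h) x = \<sigma> g (\<sigma> h x)"
  using assms by (auto simp: pmp_action_def)

lemma pmp_action_space:
  "pmp_action G M \<sigma> \<Longrightarrow> g \<in> carrier G \<Longrightarrow> x \<in> space M \<Longrightarrow> \<sigma> g x \<in> space M"
  by (blast intro: measurable_space pmp_actionD(2))

lemma pmp_action_diag:
  assumes pmp: "pmp_action G M \<sigma>"
  shows "pmp_action G (M \<Otimes>\<^sub>M M) (diag_action \<sigma>)"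
proof -
  note pm = pmp_actionD[OF pmp]
  have sf: "sigma_finite_measure M" by (rule prob_space_imp_sigma_finite[OF pm(1)])
  have meas: "diag_action \<sigma> g \<in> M \<Otimes>\<^sub>M M \<rightarrow>\<^sub>M M \<Otimes>\<^sub>M M" if g: "g \<in> carrier G" for g
    using pm(2)[OF g] unfolding diag_action_def by measurable
  have "distr (M \<Otimes>\<^sub>M M) (M \<Otimes>\<^sub>M M) (diag_action \<sigma> g) = M \<Otimes>\<^sub>M M" if g: "g \<in> carrier G" for g
    using pair_measure_distr[OF pm(2)[OF g] pm(2)[OF g]] pm(3)[OF g] sf
    by (simp add: diag_action_def)
  then show ?thesis
    using pm meas by (auto simp: pmp_action_def prob_space_pair diag_action_def space_pair_measure)
qed

lemma pmp_action_invariant_saturation: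
  fixes S :: "'y set"
  assumes G: "group G" and pmp: "pmp_action G N \<tau>" and h: "h \<in> carrier G"
  defines "E \<equiv> {p\<in>space N. \<forall>g\<in>carrier G. \<tau> g p \<in> S}"
  shows "\<tau> h -` E \<inter> space N = E"
proof (intro equalityI subsetI)
  interpret group G by fact
  note pm = pmp_actionD[OF pmp]
  fix p assume "p \<in> \<tau> h -` E \<inter> space N"
  then have p: "p \<in> space N" "\<And>g. g \<in> carrier G \<Longrightarrow> \<tau> g (\<tau> h p) \<in> S"
    by (auto simp: E_def)
  have "\<tau> g p \<in> S" if g: "g \<in> carrier G" for g
    using p(2)[of "g \<otimes>\<^bsub>G\<^esub> inv\<^bsub>G\<^esub> h"] pm(5)[of "g \<otimes>\<^bsub>G\<^esub> inv\<^bsub>G\<^esub> h" h p] g h p(1)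
    by (simp add: m_assoc)
  with p(1) show "p \<in> E" by (simp add: E_def)
next
  interpret group G by fact
  note pm = pmp_actionD[OF pmp]
  fix p assume p: "p \<in> E"
  have "\<tau> g (\<tau> h p) \<in> S" if g: "g \<in> carrier G" for g
  proof -
    from p g h have "\<tau> (g \<otimes>\<^bsub>G\<^esub> h) p \<in> S" by (simp add: E_def)
    with p g h show ?thesis by (simp add: E_def pm(5))
  qed
  with p have "\<tau> h p \<in> E"
    using pmp_action_space[OF pmp h] by (simp add: E_def)
  with p show "p \<in> \<tau> h -` E \<inter> space N" by (simp add: E_def)
qed

lemma ergodic_invariant_AE_const:
  fixes F :: "'y \<Rightarrow> complex"
  assumes G: "group G" and cG: "countable (carrier G)" and pmp: "pmp_action G N \<tau>"
    and erg: "ergodic_action G N \<tau>" and Fm[measurable]: "F \<in> borel_measurable N"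
    and inv: "\<And>g. g \<in> carrier G \<Longrightarrow> AE p in N. F (\<tau> g p) = F p"
  shows "\<exists>\<kappa>. AE p in N. F p = \<kappa>"
proof (rule AE_const_if_zero_one_law[OF pmp_actionD(1)[OF pmp] Fm])
  fix A :: "complex set" assume [measurable]: "A \<in> sets borel"
  define E where "E = {p\<in>space N. \<forall>g\<in>carrier G. \<tau> g p \<in> F -` A}"
  have "E \<in> sets N"
    unfolding E_def
  proof (rule sets.sets_Collect_countable_All'[OF _ cG])
    fix g assume "g \<in> carrier G"
    note pmp_actionD(2)[OF pmp this, measurable]
    show "{p\<in>space N. \<tau> g p \<in> F -` A} \<in> sets N" by measurable
  qed
  moreover have "\<tau> h -` E \<inter> space N = E" if "h \<in> carrier G" for h
    unfolding E_def by (rule pmp_action_invariant_saturation[OF G pmp that])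
  ultimately have "measure N E = 0 \<or> measure N E = 1"
    using erg by (auto simp: ergodic_action_def)
  moreover have "AE p in N. \<forall>g\<in>carrier G. F (\<tau> g p) = F p"
    using cG inv by (subst AE_ball_countable) auto
  then have "AE p in N. p \<in> {p\<in>space N. F p \<in> A} \<longleftrightarrow> p \<in> E"
    using AE_space by eventually_elim (use monoid.one_closed[OF group.is_monoid[OF G]] in \<open>auto simp: E_def\<close>)
  then have "measure N {p\<in>space N. F p \<in> A} = measure N E"
    by (rule measure_eq_AE) (use \<open>E \<in> sets N\<close> in measurable)
  ultimately show "measure N {p\<in>space N. F p \<in> A} = 0 \<or> measure N {p\<in>space N. F p \<in> A} = 1"
    by simp
qed

lemma weakly_mixing_eigenfunction_AE_const:
  fixes f :: "'x \<Rightarrow> complex"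
  assumes G: "group G" and cG: "countable (carrier G)" and pmp: "pmp_action G M \<sigma>"
    and wm: "weakly_mixing G M \<sigma>" and [measurable]: "f \<in> borel_measurable M"
    and f_nz: "\<And>x. x \<in> space M \<Longrightarrow> f x \<noteq> 0"
    and eigen: "\<And>g. g \<in> carrier G \<Longrightarrow> AE x in M. f (\<sigma> g x) = c g * f x"
  shows "\<exists>a. AE x in M. f x = a"
proof -
  interpret prob_space M by (rule pmp_actionD(1)[OF pmp])
  have sf: "sigma_finite_measure M" ..
  interpret pair_sigma_finite M M ..
  define F where "F p = f (fst p) / f (snd p)" for p
  \<comment> \<open>The eigenvalue cancels in the ratio, which is therefore invariant under the diagonal action.\<close>
  have "AE p in M \<Otimes>\<^sub>M M. F (diag_action \<sigma> g p) = F p" if g: "g \<in> carrier G" for g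
    using AE_pair_fst[OF prob_space_axioms eigen[OF g]]
      AE_pair_snd[OF prob_space_axioms sf eigen[OF g]]
      AE_space[of "M \<Otimes>\<^sub>M M"]
  proof eventually_elim
    case (elim p)
    then have "fst p \<in> space M" "snd p \<in> space M" by (auto simp: space_pair_measure)
    then show ?case
      using elim f_nz pmp_action_space[OF pmp g]
      by (auto simp: F_def diag_action_def split_beta field_simps)
  qed
  moreover have "F \<in> borel_measurable (M \<Otimes>\<^sub>M M)" unfolding F_def by measurable
  ultimately obtain \<kappa> where "AE p in M \<Otimes>\<^sub>M M. F p = \<kappa>"
    using ergodic_invariant_AE_const[OF G cG pmp_action_diag[OF pmp] wm[unfolded weakly_mixing_def]]
    by blast
  then have "AE x in M. AE y in M. F (x, y) = \<kappa>" by (rule AE_pair)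
  then obtain x0 where x0: "x0 \<in> space M" "AE y in M. f x0 / f y = \<kappa>"
    by (auto dest: AE_imp_ex_in_space simp: F_def)
  from x0(2) have "AE y in M. f y = f x0 / \<kappa>"
    using AE_space by eventually_elim (use f_nz x0(1) in \<open>auto simp: field_simps\<close>)
  then show ?thesis ..
qed

section \<open>Constant cochains and the map Psi\<close>

text \<open>
  The cocycle monoids Zgrp and Zagrp need not be groups (a cochain is arbitrary outside G^n, resp.
  G^n x X, so it need not be invertible), hence the cosets of coboundaries are handled with
  commutativity and a submonoid only, without carriers or inverses.
\<close>

locale comm_submonoid_cosets =
  fixes R :: "('a, 'm) monoid_scheme" and S :: "'a set"
  assumes mult_comm: "\<And>a b. a \<otimes>\<^bsub>R\<^esub> b = b \<otimes>\<^bsub>R\<^esub> a"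
    and mult_assoc: "\<And>a b c. (a \<otimes>\<^bsub>R\<^esub> b) \<otimes>\<^bsub>R\<^esub> c = a \<otimes>\<^bsub>R\<^esub> (b \<otimes>\<^bsub>R\<^esub> c)"
    and one_mult: "\<And>a. \<one>\<^bsub>R\<^esub> \<otimes>\<^bsub>R\<^esub> a = a"
    and one_mem: "\<one>\<^bsub>R\<^esub> \<in> S"
    and mult_mem: "\<And>a b. a \<in> S \<Longrightarrow> b \<in> S \<Longrightarrow> a \<otimes>\<^bsub>R\<^esub> b \<in> S"
begin

lemma r_coset_self: "c \<in> S #>\<^bsub>R\<^esub> c"
  unfolding r_coset_def by (rule UN_I[OF one_mem]) (simp add: one_mult)

lemma r_coset_subset:
  assumes "c \<in> S #>\<^bsub>R\<^esub> d"
  shows "S #>\<^bsub>R\<^esub> c \<subseteq> S #>\<^bsub>R\<^esub> d"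
proof
  fix x assume "x \<in> S #>\<^bsub>R\<^esub> c"
  then obtain s where s: "s \<in> S" "x = s \<otimes>\<^bsub>R\<^esub> c" unfolding r_coset_def by auto
  obtain t where t: "t \<in> S" "c = t \<otimes>\<^bsub>R\<^esub> d" using assms unfolding r_coset_def by auto
  have "x = (s \<otimes>\<^bsub>R\<^esub> t) \<otimes>\<^bsub>R\<^esub> d" using s t mult_assoc by simp
  then show "x \<in> S #>\<^bsub>R\<^esub> d" using mult_mem[OF s(1) t(1)] unfolding r_coset_def by auto
qed

lemma r_coset_eq_iff: "S #>\<^bsub>R\<^esub> c = S #>\<^bsub>R\<^esub> d \<longleftrightarrow> c \<in> S #>\<^bsub>R\<^esub> d \<and> d \<in> S #>\<^bsub>R\<^esub> c"
  using r_coset_subset r_coset_self by blast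

lemma set_mult_r_coset: "(S #>\<^bsub>R\<^esub> c) <#>\<^bsub>R\<^esub> (S #>\<^bsub>R\<^esub> d) = S #>\<^bsub>R\<^esub> (c \<otimes>\<^bsub>R\<^esub> d)"
proof (intro equalityI subsetI)
  fix x assume "x \<in> (S #>\<^bsub>R\<^esub> c) <#>\<^bsub>R\<^esub> (S #>\<^bsub>R\<^esub> d)"
  then obtain s t where st: "s \<in> S" "t \<in> S" "x = (s \<otimes>\<^bsub>R\<^esub> c) \<otimes>\<^bsub>R\<^esub> (t \<otimes>\<^bsub>R\<^esub> d)"
    unfolding r_coset_def set_mult_def by auto
  have "x = (s \<otimes>\<^bsub>R\<^esub> t) \<otimes>\<^bsub>R\<^esub> (c \<otimes>\<^bsub>R\<^esub> d)"
    using st(3) mult_assoc mult_comm by metis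
  then show "x \<in> S #>\<^bsub>R\<^esub> (c \<otimes>\<^bsub>R\<^esub> d)"
    using mult_mem[OF st(1,2)] unfolding r_coset_def by auto
next
  fix x assume "x \<in> S #>\<^bsub>R\<^esub> (c \<otimes>\<^bsub>R\<^esub> d)"
  then obtain s where s: "s \<in> S" "x = s \<otimes>\<^bsub>R\<^esub> (c \<otimes>\<^bsub>R\<^esub> d)" unfolding r_coset_def by auto
  have "x = (s \<otimes>\<^bsub>R\<^esub> c) \<otimes>\<^bsub>R\<^esub> (\<one>\<^bsub>R\<^esub> \<otimes>\<^bsub>R\<^esub> d)" using s mult_assoc one_mult by simp
  then show "x \<in> (S #>\<^bsub>R\<^esub> c) <#>\<^bsub>R\<^esub> (S #>\<^bsub>R\<^esub> d)"
    using s(1) one_mem unfolding r_coset_def set_mult_def by blast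
qed

end

lemma dG_mult: "dG G (\<lambda>gs. f gs * h gs) gs = dG G f gs * dG G h gs"
  by (simp add: dG_def Let_def power_int_mult_distrib prod.distrib mult_ac)

lemma dG_inverse: "dG G (\<lambda>gs. inverse (f gs)) gs = inverse (dG G f gs)"
  using prod_inversef[of "\<lambda>i. f (merge_at G i gs) powi ((-1)^i)"]
  by (simp add: dG_def Let_def power_int_inverse o_def)

lemma dG_one: "dG G (\<lambda>gs. 1) gs = 1"
  by (simp add: dG_def Let_def)

lemma dA_mult: "dA G \<sigma> (\<lambda>gs x. f gs x * h gs x) gs x = dA G \<sigma> f gs x * dA G \<sigma> h gs x"
  by (simp add: dA_def Let_def power_int_mult_distrib prod.distrib mult_ac)

lemma dA_one: "dA G \<sigma> (\<lambda>gs x. 1) gs x = 1"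
  by (simp add: dA_def Let_def)

abbreviation lift_cochain :: "('g list \<Rightarrow> complex) \<Rightarrow> 'g list \<Rightarrow> 'x \<Rightarrow> complex" where
  "lift_cochain c \<equiv> \<lambda>gs x. c gs"

lemma dA_lift_cochain: "dA G \<sigma> (lift_cochain c) gs x = dG G c gs"
  by (simp add: dA_def dG_def Let_def)

lemma Zg_mult: "f \<in> Zg G n \<Longrightarrow> h \<in> Zg G n \<Longrightarrow> (\<lambda>gs. f gs * h gs) \<in> Zg G n"
  by (simp add: Zg_def dG_mult norm_mult)

lemma Zg_one: "(\<lambda>gs. 1) \<in> Zg G n"
  by (simp add: Zg_def dG_one)

lemma Bg_one: "(\<lambda>gs. 1) \<in> Bg G n"
  using Zg_one[of G n] by (auto simp: Bg_def dG_one intro!: exI[of _ "\<lambda>_. 1"])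

lemma Bg_if_trivial_on_tuples: "c \<in> Zg G n \<Longrightarrow> \<forall>gs\<in>gtuples G n. c gs = 1 \<Longrightarrow> c \<in> Bg G n"
  by (auto simp: Bg_def dG_one intro!: exI[of _ "\<lambda>_. 1"])

lemma Bg_mult:
  assumes "f \<in> Bg G n" and "h \<in> Bg G n"
  shows "(\<lambda>gs. f gs * h gs) \<in> Bg G n"
proof (cases "n = 0")
  case True
  then show ?thesis using assms Zg_mult[of f G n h] by (auto simp: Bg_def)
next
  case False
  with assms obtain b1 b2 where
    "\<forall>gs\<in>gtuples G (n - 1). cmod (b1 gs) = 1" "\<forall>gs\<in>gtuples G n. f gs = dG G b1 gs"
    "\<forall>gs\<in>gtuples G (n - 1). cmod (b2 gs) = 1" "\<forall>gs\<in>gtuples G n. h gs = dG G b2 gs"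
    by (auto simp: Bg_def)
  with assms False show ?thesis using Zg_mult[of f G n h]
    by (auto simp: Bg_def dG_mult norm_mult intro!: exI[of _ "\<lambda>gs. b1 gs * b2 gs"])
qed

lemma comm_submonoid_cosets_Zgrp: "comm_submonoid_cosets (Zgrp G n) (Bg G n)"
  by unfold_locales (auto simp: Zgrp_def mult_ac Bg_one Bg_mult)

lemma meas_cochain_mult:
  "meas_cochain G M n f \<Longrightarrow> meas_cochain G M n h \<Longrightarrow> meas_cochain G M n (\<lambda>gs x. f gs x * h gs x)"
  by (auto simp: meas_cochain_def norm_mult intro!: borel_measurable_times)

lemma meas_cochain_one: "meas_cochain G M n (\<lambda>gs x. 1)"
  by (auto simp: meas_cochain_def)

lemma meas_cochain_lift_cochain:
  "\<forall>gs\<in>gtuples G n. cmod (c gs) = 1 \<Longrightarrow> meas_cochain G M n (lift_cochain c)"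
  by (auto simp: meas_cochain_def)

lemma Za_mult:
  assumes "f \<in> Za G M \<sigma> n" and "h \<in> Za G M \<sigma> n"
  shows "(\<lambda>gs x. f gs x * h gs x) \<in> Za G M \<sigma> n"
  unfolding Za_def
proof (safe intro!: meas_cochain_mult)
  fix gs assume "gs \<in> gtuples G (Suc n)"
  with assms have "AE x in M. dA G \<sigma> f gs x = 1" "AE x in M. dA G \<sigma> h gs x = 1"
    by (auto simp: Za_def)
  then show "AE x in M. dA G \<sigma> (\<lambda>gs x. f gs x * h gs x) gs x = 1"
    by eventually_elim (simp add: dA_mult)
qed (use assms in \<open>auto simp: Za_def\<close>)

lemma Za_one: "(\<lambda>gs x. 1) \<in> Za G M \<sigma> n"
  by (simp add: Za_def meas_cochain_one dA_one)

lemma Ba_one: "(\<lambda>gs x. 1) \<in> Ba G M \<sigma> n"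
  by (auto simp: Ba_def Za_one cohomologous_def meas_cochain_one dA_one
      intro!: exI[of _ "\<lambda>_ _. 1"])

lemma Ba_mult:
  assumes a1: "a1 \<in> Ba G M \<sigma> n" and a2: "a2 \<in> Ba G M \<sigma> n"
  shows "(\<lambda>gs x. a1 gs x * a2 gs x) \<in> Ba G M \<sigma> n"
proof -
  have Z: "(\<lambda>gs x. a1 gs x * a2 gs x) \<in> Za G M \<sigma> n" using a1 a2 Za_mult by (auto simp: Ba_def)
  show ?thesis
  proof (cases "n = 0")
    case True
    have "AE x in M. a1 gs x * a2 gs x = 1" if "gs \<in> gtuples G 0" for gs
    proof -
      have "AE x in M. a1 gs x = 1" "AE x in M. a2 gs x = 1"
        using a1 a2 that True by (auto simp: Ba_def cohomologous_def)
      then show ?thesis by eventually_elim simp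
    qed
    with Z True show ?thesis by (auto simp: Ba_def cohomologous_def)
  next
    case False
    obtain b1 where b1: "meas_cochain G M (n - 1) b1"
       "\<forall>gs\<in>gtuples G n. AE x in M. a1 gs x * dA G \<sigma> b1 gs x = 1"
      using a1 False by (auto simp: Ba_def cohomologous_def)
    obtain b2 where b2: "meas_cochain G M (n - 1) b2"
       "\<forall>gs\<in>gtuples G n. AE x in M. a2 gs x * dA G \<sigma> b2 gs x = 1"
      using a2 False by (auto simp: Ba_def cohomologous_def)
    have "AE x in M. a1 gs x * a2 gs x * dA G \<sigma> (\<lambda>gs x. b1 gs x * b2 gs x) gs x = 1"
      if "gs \<in> gtuples G n" for gs
    proof -
      have "AE x in M. a1 gs x * dA G \<sigma> b1 gs x = 1" "AE x in M. a2 gs x * dA G \<sigma> b2 gs x = 1"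
        using b1(2) b2(2) that by auto
      then show ?thesis
      proof eventually_elim
        case (elim x)
        have "a1 gs x * a2 gs x * dA G \<sigma> (\<lambda>gs x. b1 gs x * b2 gs x) gs x
            = (a1 gs x * dA G \<sigma> b1 gs x) * (a2 gs x * dA G \<sigma> b2 gs x)"
          by (simp add: dA_mult mult_ac)
        with elim show ?case by simp
      qed
    qed
    with Z False b1 b2 show ?thesis
      by (auto simp: Ba_def cohomologous_def intro!: exI[of _ "\<lambda>gs x. b1 gs x * b2 gs x"]
          meas_cochain_mult)
  qed
qed

lemma comm_submonoid_cosets_Zagrp: "comm_submonoid_cosets (Zagrp G M \<sigma> n) (Ba G M \<sigma> n)"
  by unfold_locales (auto simp: Zagrp_def mult_ac Ba_one Ba_mult)

lemma cohomologous_cong: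
  assumes "\<And>gs x. gs \<in> gtuples G n \<Longrightarrow> x \<in> space M \<Longrightarrow> c1 gs x = c1' gs x"
  shows "cohomologous G M \<sigma> n c1 c2 \<longleftrightarrow> cohomologous G M \<sigma> n c1' c2"
proof (cases "n = 0")
  case True
  with assms show ?thesis by (simp add: cohomologous_def)
next
  case False
  with assms show ?thesis by (simp add: cohomologous_def)
qed

lemma lift_cochain_Za: "c \<in> Zg G n \<Longrightarrow> lift_cochain c \<in> Za G M \<sigma> n"
  by (auto simp: Za_def Zg_def dA_lift_cochain meas_cochain_lift_cochain)

lemma lift_cochain_Ba:
  assumes c: "c \<in> Bg G n"
  shows "lift_cochain c \<in> Ba G M \<sigma> n"
proof (cases "n = 0")
  case True
  with c show ?thesis using lift_cochain_Za[of c G n M \<sigma>]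
    by (auto simp: Bg_def Ba_def cohomologous_def)
next
  case False
  with c obtain b where b: "\<forall>gs\<in>gtuples G (n - 1). cmod (b gs) = 1"
      "\<forall>gs\<in>gtuples G n. c gs = dG G b gs"
    by (auto simp: Bg_def)
  have cZ: "c \<in> Zg G n" using c by (simp add: Bg_def)
  have "c gs * dA G \<sigma> (lift_cochain (\<lambda>gs. inverse (b gs))) gs x = 1" if "gs \<in> gtuples G n" for gs x
  proof -
    have "c gs \<noteq> 0" using cZ that by (auto simp: Zg_def)
    with b(2) that show ?thesis by (simp add: dA_lift_cochain dG_inverse)
  qed
  moreover have "meas_cochain G M (n - 1) (lift_cochain (\<lambda>gs. inverse (b gs)))"
    using b(1) by (intro meas_cochain_lift_cochain) (simp add: norm_inverse)
  ultimately show ?thesis using False lift_cochain_Za[OF cZ, of M \<sigma>]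
    by (auto simp: Ba_def cohomologous_def intro!: exI[of _ "lift_cochain (\<lambda>gs. inverse (b gs))"])
qed

lemma carrier_Hgrp: "carrier (Hgrp G n) = Hclass G n ` Zg G n"
  by (simp add: Hgrp_def carrier_FactGroup Zgrp_def Hclass_def)

lemma carrier_Hact: "carrier (Hact G M \<sigma> n) = Haclass G M \<sigma> n ` Za G M \<sigma> n"
  by (simp add: Hact_def carrier_FactGroup Zagrp_def Haclass_def)

lemma Hclass_mult: "Hclass G n c \<otimes>\<^bsub>Hgrp G n\<^esub> Hclass G n d = Hclass G n (\<lambda>gs. c gs * d gs)"
proof -
  interpret comm_submonoid_cosets "Zgrp G n" "Bg G n" by (rule comm_submonoid_cosets_Zgrp)
  show ?thesis
    using set_mult_r_coset[of c d] by (simp add: Hgrp_def FactGroup_def Hclass_def Zgrp_def)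
qed

lemma Haclass_mult:
  "Haclass G M \<sigma> n c \<otimes>\<^bsub>Hact G M \<sigma> n\<^esub> Haclass G M \<sigma> n d = Haclass G M \<sigma> n (\<lambda>gs x. c gs x * d gs x)"
proof -
  interpret comm_submonoid_cosets "Zagrp G M \<sigma> n" "Ba G M \<sigma> n" by (rule comm_submonoid_cosets_Zagrp)
  show ?thesis
    using set_mult_r_coset[of c d] by (simp add: Hact_def FactGroup_def Haclass_def Zagrp_def)
qed

lemma Haclass_lift_cochain_cong:
  assumes c: "c \<in> Zg G n" and c': "c' \<in> Zg G n" and eq: "Hclass G n c = Hclass G n c'"
  shows "Haclass G M \<sigma> n (lift_cochain c) = Haclass G M \<sigma> n (lift_cochain c')"
proof -
  interpret Z: comm_submonoid_cosets "Zgrp G n" "Bg G n" by (rule comm_submonoid_cosets_Zgrp)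
  interpret A: comm_submonoid_cosets "Zagrp G M \<sigma> n" "Ba G M \<sigma> n"
    by (rule comm_submonoid_cosets_Zagrp)
  have lift: "lift_cochain d \<in> Ba G M \<sigma> n #>\<^bsub>Zagrp G M \<sigma> n\<^esub> lift_cochain d'"
    if "d \<in> Bg G n #>\<^bsub>Zgrp G n\<^esub> d'" for d d'
  proof -
    from that obtain b where "b \<in> Bg G n" "d = (\<lambda>gs. b gs * d' gs)"
      unfolding r_coset_def by (auto simp: Zgrp_def)
    then show ?thesis
      unfolding r_coset_def by (intro UN_I[OF lift_cochain_Ba]) (simp_all add: Zagrp_def)
  qed
  from eq show ?thesis
    unfolding Hclass_def Haclass_def Z.r_coset_eq_iff A.r_coset_eq_iff by (blast intro: lift)
qed

lemma Hclass_eq_if_Haclass_eq: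
  assumes reflect: "\<And>b. b \<in> Zg G n \<Longrightarrow> cohomologous G M \<sigma> n (lift_cochain b) (\<lambda>_ _. 1) \<Longrightarrow> b \<in> Bg G n"
    and c: "c \<in> Zg G n" and c': "c' \<in> Zg G n"
    and eq: "Haclass G M \<sigma> n (lift_cochain c) = Haclass G M \<sigma> n (lift_cochain c')"
  shows "Hclass G n c = Hclass G n c'"
proof -
  interpret Z: comm_submonoid_cosets "Zgrp G n" "Bg G n" by (rule comm_submonoid_cosets_Zgrp)
  interpret A: comm_submonoid_cosets "Zagrp G M \<sigma> n" "Ba G M \<sigma> n"
    by (rule comm_submonoid_cosets_Zagrp)
  have descend: "d \<in> Bg G n #>\<^bsub>Zgrp G n\<^esub> d'"
    if d: "d \<in> Zg G n" and d': "d' \<in> Zg G n"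
      and "lift_cochain d \<in> Ba G M \<sigma> n #>\<^bsub>Zagrp G M \<sigma> n\<^esub> lift_cochain d'" for d d'
  proof -
    from that(3) obtain a where a: "a \<in> Ba G M \<sigma> n" and "lift_cochain d = (\<lambda>gs x. a gs x * d' gs)"
      unfolding r_coset_def by (auto simp: Zagrp_def)
    then have d_eq: "d gs = a gs x * d' gs" for gs x by metis
    define b where "b gs = d gs / d' gs" for gs
    have d'_nz: "d' gs \<noteq> 0" if "gs \<in> gtuples G n" for gs using d' that by (auto simp: Zg_def)
    have "b \<in> Zg G n"
      using Zg_mult[OF d, of "\<lambda>gs. inverse (d' gs)"] d' unfolding b_def
      by (auto simp: Zg_def dG_inverse norm_inverse divide_inverse)
    moreover have "cohomologous G M \<sigma> n (lift_cochain b) (\<lambda>_ _. 1)"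
    proof (subst cohomologous_cong[where c1'=a])
      show "b gs = a gs x" if "gs \<in> gtuples G n" for gs x
        using d_eq[of gs x] d'_nz[OF that] by (simp add: b_def)
    qed (use a in \<open>simp add: Ba_def\<close>)
    ultimately have "b \<in> Bg G n" by (rule reflect)
    moreover have "d = (\<lambda>gs. b gs * d' gs)"
    proof
      show "d gs = b gs * d' gs" for gs
        using d_eq[of gs undefined] by (cases "d' gs = 0") (simp_all add: b_def)
    qed
    ultimately show ?thesis
      unfolding r_coset_def by (intro UN_I[of b]) (simp_all add: Zgrp_def)
  qed
  from eq show ?thesis
    unfolding Hclass_def Haclass_def Z.r_coset_eq_iff A.r_coset_eq_iff
    using descend c c' by blast
qed

lemma lift_cochain_induces_hom:
  "\<exists>\<Psi>. \<Psi> \<in> hom (Hgrp G n) (Hact G M \<sigma> n) \<and>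
        (\<forall>c\<in>Zg G n. \<Psi> (Hclass G n c) = Haclass G M \<sigma> n (lift_cochain c))"
proof -
  define \<Psi> where "\<Psi> X = Haclass G M \<sigma> n (lift_cochain (SOME c. c \<in> Zg G n \<and> X = Hclass G n c))"
    for X
  have \<Psi>_Hclass: "\<Psi> (Hclass G n c) = Haclass G M \<sigma> n (lift_cochain c)" if c: "c \<in> Zg G n" for c
  proof -
    define c0 where "c0 = (SOME c0. c0 \<in> Zg G n \<and> Hclass G n c = Hclass G n c0)"
    from c have "\<exists>c0. c0 \<in> Zg G n \<and> Hclass G n c = Hclass G n c0" by blast
    then have "c0 \<in> Zg G n \<and> Hclass G n c = Hclass G n c0"
      unfolding c0_def by (rule someI_ex)
    then have "Haclass G M \<sigma> n (lift_cochain c0) = Haclass G M \<sigma> n (lift_cochain c)"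
      using Haclass_lift_cochain_cong[of c0 G n c] c by simp
    then show ?thesis by (simp add: \<Psi>_def c0_def)
  qed
  have "\<Psi> \<in> hom (Hgrp G n) (Hact G M \<sigma> n)"
  proof (rule homI)
    fix X assume "X \<in> carrier (Hgrp G n)"
    then obtain c where "c \<in> Zg G n" "X = Hclass G n c" by (auto simp: carrier_Hgrp)
    then show "\<Psi> X \<in> carrier (Hact G M \<sigma> n)"
      by (simp add: \<Psi>_Hclass carrier_Hact lift_cochain_Za)
  next
    fix X Y assume "X \<in> carrier (Hgrp G n)" "Y \<in> carrier (Hgrp G n)"
    then obtain c d where "c \<in> Zg G n" "X = Hclass G n c" "d \<in> Zg G n" "Y = Hclass G n d"
      by (auto simp: carrier_Hgrp)
    then show "\<Psi> (X \<otimes>\<^bsub>Hgrp G n\<^esub> Y) = \<Psi> X \<otimes>\<^bsub>Hact G M \<sigma> n\<^esub> \<Psi> Y"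
      by (simp add: Hclass_mult Haclass_mult \<Psi>_Hclass Zg_mult)
  qed
  with \<Psi>_Hclass show ?thesis by blast
qed

lemma gtuples_0: "gtuples G 0 = {[]}"
  by (auto simp: gtuples_def)

lemma gtuples_1: "gtuples G (Suc 0) = (\<lambda>g. [g]) ` carrier G"
  by (auto simp: gtuples_def length_Suc_conv)

lemma gtuples_2: "gtuples G 2 = (\<lambda>(g, h). [g, h]) ` (carrier G \<times> carrier G)"
  by (auto simp: gtuples_def length_Suc_conv numeral_2_eq_2 image_iff)

lemma dA_1: "dA G \<sigma> \<beta> [g] x = \<beta> [] (\<sigma> (inv\<^bsub>G\<^esub> g) x) * inverse (\<beta> [] x)"
  by (simp add: dA_def)

lemma dA_2:
  "dA G \<sigma> \<beta> [g, h] x = \<beta> [h] (\<sigma> (inv\<^bsub>G\<^esub> g) x) * inverse (\<beta> [g \<otimes>\<^bsub>G\<^esub> h] x) * \<beta> [g] x"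
  by (simp add: dA_def merge_at_def)

lemma dG_2: "dG G b [g, h] = b [h] * inverse (b [g \<otimes>\<^bsub>G\<^esub> h]) * b [g]"
  by (simp add: dG_def merge_at_def)

section \<open>Injectivity in degree one\<close>

lemma Bg_1_if_lift_cochain_cohomologous_trivial:
  fixes G (structure)
  assumes G: "group G" and cG: "countable (carrier G)" and pmp: "pmp_action G M \<sigma>"
    and wm: "weakly_mixing G M \<sigma>"
    and b: "b \<in> Zg G 1" and coh: "cohomologous G M \<sigma> 1 (lift_cochain b) (\<lambda>_ _. 1)"
  shows "b \<in> Bg G 1"
proof -
  interpret group G by fact
  interpret prob_space M by (rule pmp_actionD(1)[OF pmp])
  from coh obtain \<beta> where \<beta>: "meas_cochain G M 0 \<beta>"
      and rel: "\<forall>gs\<in>gtuples G 1. AE x in M. b gs * dA G \<sigma> \<beta> gs x = 1"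
    by (auto simp: cohomologous_def)
  define f where "f = \<beta> []"
  have f_meas[measurable]: "f \<in> borel_measurable M" and f_nz: "\<And>x. x \<in> space M \<Longrightarrow> f x \<noteq> 0"
    using \<beta> by (auto simp: f_def meas_cochain_def gtuples_0)
  have rel_g: "AE x in M. b [g] * f (\<sigma> (inv g) x) = f x" if g: "g \<in> carrier G" for g
  proof -
    have "AE x in M. b [g] * (f (\<sigma> (inv g) x) * inverse (f x)) = 1"
      using rel g by (auto simp: gtuples_1 dA_1 f_def)
    then show ?thesis
      using AE_space by eventually_elim (use f_nz in \<open>auto simp: field_simps\<close>)
  qed
  have "AE x in M. f (\<sigma> h x) = inverse (b [inv h]) * f x" if h: "h \<in> carrier G" for h
    using rel_g[OF inv_closed[OF h]] AE_space
  proof eventually_elim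
    case (elim x)
    with h have eq: "b [inv h] * f (\<sigma> h x) = f x" by simp
    then have "b [inv h] \<noteq> 0" using f_nz[OF elim(2)] by auto
    then have "f (\<sigma> h x) = inverse (b [inv h]) * (b [inv h] * f (\<sigma> h x))" by simp
    also have "\<dots> = inverse (b [inv h]) * f x" by (simp only: eq)
    finally show ?case .
  qed
  then obtain a where a: "AE x in M. f x = a"
    using weakly_mixing_eigenfunction_AE_const[OF G cG pmp wm f_meas f_nz,
        of "\<lambda>h. inverse (b [inv h])"] by blast
  then have "a \<noteq> 0" using AE_imp_ex_in_space[OF a] f_nz by blast
  have "b [g] = 1" if g: "g \<in> carrier G" for g
  proof -
    have "AE x in M. f (\<sigma> (inv g) x) = a"
      using pmp_actionD(2,3)[OF pmp] g by (intro AE_measure_preserving[OF _ _ a]) auto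
    with rel_g[OF g] a have "AE x in M. b [g] * a = a" by eventually_elim simp
    with \<open>a \<noteq> 0\<close> show ?thesis by simp
  qed
  then show ?thesis by (intro Bg_if_trivial_on_tuples[OF b]) (auto simp: gtuples_1)
qed

section \<open>Injectivity in degree two\<close>

definition cross_ratio :: "('a \<times> 'b \<Rightarrow> complex) \<Rightarrow> ('a \<times> 'b) \<times> ('a \<times> 'b) \<Rightarrow> complex" where
  "cross_ratio F P =
    F (fst P) * F (snd P) / (F (fst (fst P), snd (snd P)) * F (fst (snd P), snd (fst P)))"

lemma cross_ratio_AE_invariant:
  fixes F :: "'a \<times> 'b \<Rightarrow> complex"
  assumes M1: "prob_space M1" and M2: "prob_space M2"
    and F_nz: "\<And>p. p \<in> space (M1 \<Otimes>\<^sub>M M2) \<Longrightarrow> F p \<noteq> 0"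
    and u_nz: "\<And>x. x \<in> space M1 \<Longrightarrow> u x \<noteq> 0" and v_nz: "\<And>y. y \<in> space M2 \<Longrightarrow> v y \<noteq> 0"
    and "c \<noteq> 0"
    and shift: "AE p in M1 \<Otimes>\<^sub>M M2. F (map_prod \<tau>1 \<tau>2 p) = c * u (fst p) * v (snd p) * F p"
  shows "AE P in (M1 \<Otimes>\<^sub>M M2) \<Otimes>\<^sub>M (M1 \<Otimes>\<^sub>M M2).
    cross_ratio F (map_prod (map_prod \<tau>1 \<tau>2) (map_prod \<tau>1 \<tau>2) P) = cross_ratio F P"
proof -
  have P: "prob_space (M1 \<Otimes>\<^sub>M M2)" using M1 M2 by (rule prob_space_pair)
  have sf: "sigma_finite_measure (M1 \<Otimes>\<^sub>M M2)" using P by (rule prob_space_imp_sigma_finite)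
  show ?thesis
    using AE_pair_fst[OF P shift] AE_pair_snd[OF P sf shift]
      AE_pair_cross[OF M1 M2 shift] AE_pair_cross_swap[OF M1 M2 shift] AE_space
  proof eventually_elim
    case (elim P)
    obtain x y z t where P: "P = ((x, y), (z, t))" by (cases P) auto
    with elim(5) have "x \<in> space M1" "y \<in> space M2" "z \<in> space M1" "t \<in> space M2"
      by (auto simp: space_pair_measure)
    then have "F (x, y) \<noteq> 0" "F (z, t) \<noteq> 0" "F (x, t) \<noteq> 0" "F (z, y) \<noteq> 0"
      "u x \<noteq> 0" "u z \<noteq> 0" "v y \<noteq> 0" "v t \<noteq> 0"
      using F_nz u_nz v_nz by (auto simp: space_pair_measure)
    with elim(1-4) \<open>c \<noteq> 0\<close> show ?case by (simp add: P cross_ratio_def field_simps)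
  qed
qed

lemma AE_split_if_cross_ratio_AE_const:
  fixes F :: "'a \<times> 'b \<Rightarrow> complex"
  assumes M1: "prob_space M1" and M2: "prob_space M2"
    and F_meas[measurable]: "F \<in> borel_measurable (M1 \<Otimes>\<^sub>M M2)"
    and F_1: "\<And>p. p \<in> space (M1 \<Otimes>\<^sub>M M2) \<Longrightarrow> cmod (F p) = 1"
    and const: "AE P in (M1 \<Otimes>\<^sub>M M2) \<Otimes>\<^sub>M (M1 \<Otimes>\<^sub>M M2). cross_ratio F P = \<kappa>"
  obtains k1 k2 where "k1 \<in> borel_measurable M1" and "k2 \<in> borel_measurable M2"
    and "\<And>x. x \<in> space M1 \<Longrightarrow> cmod (k1 x) = 1" and "\<And>y. y \<in> space M2 \<Longrightarrow> cmod (k2 y) = 1"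
    and "AE p in M1 \<Otimes>\<^sub>M M2. F p = k1 (fst p) * k2 (snd p)"
proof -
  interpret P: prob_space "M1 \<Otimes>\<^sub>M M2" using M1 M2 by (rule prob_space_pair)
  interpret pair_sigma_finite "M1 \<Otimes>\<^sub>M M2" "M1 \<Otimes>\<^sub>M M2" ..
  have "AE q in M1 \<Otimes>\<^sub>M M2. AE p in M1 \<Otimes>\<^sub>M M2. cross_ratio F (p, q) = \<kappa>"
    using AE_pair[OF const] by (subst (asm) AE_commute) (unfold cross_ratio_def, measurable)
  then obtain q0 where q0: "q0 \<in> space (M1 \<Otimes>\<^sub>M M2)"
    and "AE p in M1 \<Otimes>\<^sub>M M2. cross_ratio F (p, q0) = \<kappa>"
    by (rule bexE[OF P.AE_imp_ex_in_space])
  obtain z0 t0 where "q0 = (z0, t0)" by (cases q0)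
  with q0 \<open>AE p in M1 \<Otimes>\<^sub>M M2. cross_ratio F (p, q0) = \<kappa>\<close>
  have q0: "(z0, t0) \<in> space (M1 \<Otimes>\<^sub>M M2)"
    and AE_q0: "AE p in M1 \<Otimes>\<^sub>M M2. cross_ratio F (p, (z0, t0)) = \<kappa>"
    by simp_all
  then have z0: "z0 \<in> space M1" and t0: "t0 \<in> space M2" by (auto simp: space_pair_measure)
  have F_nz: "F p \<noteq> 0" if "p \<in> space (M1 \<Otimes>\<^sub>M M2)" for p using F_1[OF that] by auto
  from P.AE_imp_ex_in_space[OF AE_q0] obtain p0
    where "p0 \<in> space (M1 \<Otimes>\<^sub>M M2)" "cross_ratio F (p0, (z0, t0)) = \<kappa>" ..
  with q0 z0 t0 have "cmod \<kappa> = 1"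
    by (auto simp: cross_ratio_def space_pair_measure norm_mult norm_divide F_1)
  show ?thesis
  proof (rule that[of "\<lambda>x. \<kappa> * F (x, t0) / F (z0, t0)" "\<lambda>y. F (z0, y)"])
    show "(\<lambda>x. \<kappa> * F (x, t0) / F (z0, t0)) \<in> borel_measurable M1"
      "(\<lambda>y. F (z0, y)) \<in> borel_measurable M2"
      using z0 t0 by measurable
    show "cmod (\<kappa> * F (x, t0) / F (z0, t0)) = 1" if "x \<in> space M1" for x
      using that z0 t0 \<open>cmod \<kappa> = 1\<close> by (simp add: norm_mult norm_divide F_1 space_pair_measure)
    show "cmod (F (z0, y)) = 1" if "y \<in> space M2" for y
      using that z0 by (simp add: F_1 space_pair_measure)
    show "AE p in M1 \<Otimes>\<^sub>M M2. F p = \<kappa> * F (fst p, t0) / F (z0, t0) * F (z0, snd p)"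
      using AE_q0 AE_space
    proof eventually_elim
      case (elim p)
      then have "F (fst p, t0) \<noteq> 0" "F (z0, snd p) \<noteq> 0" "F (z0, t0) \<noteq> 0"
        using F_nz z0 t0 by (auto simp: space_pair_measure)
      with elim(1) show ?case by (auto simp: cross_ratio_def field_simps)
    qed
  qed
qed

lemma AE_coboundary_const_if_ratio_split:
  fixes B k1 k2 :: "'x \<Rightarrow> complex"
  assumes M: "prob_space M" and [measurable]: "\<tau> \<in> M \<rightarrow>\<^sub>M M"
    and [measurable]: "B \<in> borel_measurable M" "k1 \<in> borel_measurable M" "k2 \<in> borel_measurable M"
    and B_1: "\<And>x. x \<in> space M \<Longrightarrow> cmod (B x) = 1"
    and k1_1: "\<And>x. x \<in> space M \<Longrightarrow> cmod (k1 x) = 1"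
    and k2_1: "\<And>x. x \<in> space M \<Longrightarrow> cmod (k2 x) = 1" and "cmod c = 1"
    and ratio: "AE p in M \<Otimes>\<^sub>M M. B (fst p) / B (snd p)
      = c * (k1 (fst p) * k2 (snd p)) / (k1 (\<tau> (fst p)) * k2 (\<tau> (snd p)))"
  shows "\<exists>m. cmod m = 1 \<and> (AE x in M. B x = m * k1 x / k1 (\<tau> x))"
proof -
  have nz: "B x \<noteq> 0" "k1 x \<noteq> 0" "k2 x \<noteq> 0" "k1 (\<tau> x) \<noteq> 0" "k2 (\<tau> x) \<noteq> 0"
    if "x \<in> space M" for x
    using B_1 k1_1 k2_1 measurable_space[of \<tau> M M x] that by fastforce+
  define u where "u x = B x * k1 (\<tau> x) / k1 x" for x
  define v where "v y = c * k2 y / k2 (\<tau> y) * B y" for y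
  \<comment> \<open>Separating the variables: the left side depends only on the first coordinate, the right side
    only on the second.\<close>
  have "AE p in M \<Otimes>\<^sub>M M. u (fst p) = v (snd p)"
    using ratio AE_space
  proof eventually_elim
    case (elim p)
    then have "fst p \<in> space M" "snd p \<in> space M" by (auto simp: space_pair_measure)
    with elim(1) nz show ?case by (auto simp: u_def v_def field_simps)
  qed
  moreover have "u \<in> borel_measurable M" "v \<in> borel_measurable M"
    unfolding u_def v_def by measurable
  ultimately obtain y0 where y0: "y0 \<in> space M" "AE x in M. u x = v y0"
    using AE_pair_separated_const[OF M M] by blast
  have "cmod (v y0) = 1"
    using y0(1) B_1 k2_1 \<open>cmod c = 1\<close> measurable_space[of \<tau> M M y0]
    by (simp add: v_def norm_mult norm_divide)
  moreover from y0(2) have "AE x in M. B x = v y0 * k1 x / k1 (\<tau> x)"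
    using AE_space by eventually_elim (use nz in \<open>auto simp: u_def field_simps\<close>)
  ultimately show ?thesis by blast
qed

lemma diag_action_eq_map_prod: "diag_action \<sigma> g = map_prod (\<sigma> g) (\<sigma> g)"
  by (auto simp: diag_action_def fun_eq_iff)

definition diag_ratio :: "('g \<Rightarrow> 'x \<Rightarrow> complex) \<Rightarrow> 'g \<Rightarrow> 'x \<times> 'x \<Rightarrow> complex" where
  "diag_ratio B g p = B g (fst p) / B g (snd p)"

lemma diag_ratio_AE_cocycle:
  fixes G (structure)
    and B :: "'g \<Rightarrow> 'x \<Rightarrow> complex"
  assumes G: "group G" and pmp: "pmp_action G M \<sigma>"
    and B_1: "\<And>g x. g \<in> carrier G \<Longrightarrow> x \<in> space M \<Longrightarrow> cmod (B g x) = 1"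
    and cocycle: "AE x in M. B (g \<otimes> h) x = c * B h (\<sigma> (inv g) x) * B g x"
    and "c \<noteq> 0" and g: "g \<in> carrier G" and h: "h \<in> carrier G"
  shows "AE p in M \<Otimes>\<^sub>M M.
    diag_ratio B (g \<otimes> h) p = diag_ratio B g p * diag_ratio B h (diag_action \<sigma> (inv g) p)"
proof -
  interpret group G by fact
  interpret prob_space M by (rule pmp_actionD(1)[OF pmp])
  have sf: "sigma_finite_measure M" ..
  have B_nz: "B k y \<noteq> 0" if "k \<in> carrier G" "y \<in> space M" for k y using B_1[OF that] by auto
  show ?thesis
    using AE_pair_fst[OF prob_space_axioms cocycle] AE_pair_snd[OF prob_space_axioms sf cocycle]
      AE_space[of "M \<Otimes>\<^sub>M M"]
  proof eventually_elim
    case (elim p)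
    then have "fst p \<in> space M" "snd p \<in> space M" by (auto simp: space_pair_measure)
    then have nz: "B h (\<sigma> (inv g) (fst p)) \<noteq> 0" "B h (\<sigma> (inv g) (snd p)) \<noteq> 0"
      "B g (fst p) \<noteq> 0" "B g (snd p) \<noteq> 0"
      using B_nz pmp_action_space[OF pmp] g h by simp_all
    have "diag_ratio B (g \<otimes> h) p = (c * B h (\<sigma> (inv g) (fst p)) * B g (fst p))
        / (c * B h (\<sigma> (inv g) (snd p)) * B g (snd p))"
      using elim(1,2) by (simp add: diag_ratio_def)
    also have "\<dots> = diag_ratio B g p * diag_ratio B h (diag_action \<sigma> (inv g) p)"
      using nz \<open>c \<noteq> 0\<close> by (simp add: diag_ratio_def diag_action_def split_beta mult_ac)
    finally show ?case .
  qed
qed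

lemma diag_ratio_untwisted:
  fixes G (structure)
    and B :: "'g \<Rightarrow> 'x \<Rightarrow> complex"
  assumes G: "group G" and pmp: "pmp_action G M \<sigma>"
    and sr: "T_cocycle_superrigid G (M \<Otimes>\<^sub>M M) (diag_action \<sigma>)"
    and B_meas: "\<And>g. g \<in> carrier G \<Longrightarrow> B g \<in> borel_measurable M"
    and B_1: "\<And>g x. g \<in> carrier G \<Longrightarrow> x \<in> space M \<Longrightarrow> cmod (B g x) = 1"
    and cocycle: "\<And>g h. g \<in> carrier G \<Longrightarrow> h \<in> carrier G \<Longrightarrow>
      AE x in M. B (g \<otimes> h) x = c g h * B h (\<sigma> (inv g) x) * B g x"
    and c_nz: "\<And>g h. g \<in> carrier G \<Longrightarrow> h \<in> carrier G \<Longrightarrow> c g h \<noteq> 0"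
  obtains \<gamma> F where "\<And>g. g \<in> carrier G \<Longrightarrow> cmod (\<gamma> g) = 1"
    and "F \<in> borel_measurable (M \<Otimes>\<^sub>M M)" and "\<And>p. p \<in> space (M \<Otimes>\<^sub>M M) \<Longrightarrow> cmod (F p) = 1"
    and "\<And>g. g \<in> carrier G \<Longrightarrow> AE p in M \<Otimes>\<^sub>M M.
      B g (fst p) / B g (snd p) = \<gamma> g * F p / F (diag_action \<sigma> (inv g) p)"
proof -
  have "diag_ratio B g \<in> borel_measurable (M \<Otimes>\<^sub>M M)" if "g \<in> carrier G" for g
    using B_meas[OF that] unfolding diag_ratio_def by measurable
  moreover have "cmod (diag_ratio B g p) = 1" if "g \<in> carrier G" "p \<in> space (M \<Otimes>\<^sub>M M)" for g p
  proof -
    from that have "fst p \<in> space M" "snd p \<in> space M" by (auto simp: space_pair_measure)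
    with that show ?thesis by (simp add: diag_ratio_def norm_divide B_1)
  qed
  moreover have "AE p in M \<Otimes>\<^sub>M M.
      diag_ratio B (g \<otimes> h) p = diag_ratio B g p * diag_ratio B h (diag_action \<sigma> (inv g) p)"
    if "g \<in> carrier G" "h \<in> carrier G" for g h
    using diag_ratio_AE_cocycle[OF G pmp B_1 cocycle[OF that] c_nz[OF that] that] .
  ultimately have "\<exists>\<gamma> F. (\<forall>g\<in>carrier G. cmod (\<gamma> g) = 1) \<and>
      (\<forall>g\<in>carrier G. \<forall>h\<in>carrier G. \<gamma> (g \<otimes> h) = \<gamma> g * \<gamma> h) \<and>
      F \<in> borel_measurable (M \<Otimes>\<^sub>M M) \<and> (\<forall>p\<in>space (M \<Otimes>\<^sub>M M). cmod (F p) = 1) \<and>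
      (\<forall>g\<in>carrier G. AE p in M \<Otimes>\<^sub>M M.
        diag_ratio B g p = \<gamma> g * F p / F (diag_action \<sigma> (inv g) p))"
    using sr[unfolded T_cocycle_superrigid_def, THEN conjunct2, THEN conjunct2, THEN conjunct2,
        rule_format, of "diag_ratio B"]
    by blast
  then obtain \<gamma> F where "\<forall>g\<in>carrier G. cmod (\<gamma> g) = 1" "F \<in> borel_measurable (M \<Otimes>\<^sub>M M)"
    "\<forall>p\<in>space (M \<Otimes>\<^sub>M M). cmod (F p) = 1"
    "\<forall>g\<in>carrier G. AE p in M \<Otimes>\<^sub>M M. diag_ratio B g p = \<gamma> g * F p / F (diag_action \<sigma> (inv g) p)"
    by blast
  then show ?thesis by (intro that[of \<gamma> F]) (auto simp: diag_ratio_def)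
qed

lemma transfer_function_AE_split:
  fixes G (structure)
    and B :: "'g \<Rightarrow> 'x \<Rightarrow> complex" and F :: "'x \<times> 'x \<Rightarrow> complex"
  assumes G: "group G" and cG: "countable (carrier G)" and pmp: "pmp_action G M \<sigma>"
    and wm: "weakly_mixing G (M \<Otimes>\<^sub>M M) (diag_action \<sigma>)"
    and B_1: "\<And>g x. g \<in> carrier G \<Longrightarrow> x \<in> space M \<Longrightarrow> cmod (B g x) = 1"
    and \<gamma>_1: "\<And>g. g \<in> carrier G \<Longrightarrow> cmod (\<gamma> g) = 1"
    and F_meas[measurable]: "F \<in> borel_measurable (M \<Otimes>\<^sub>M M)"
    and F_1: "\<And>p. p \<in> space (M \<Otimes>\<^sub>M M) \<Longrightarrow> cmod (F p) = 1"
    and F_rel: "\<And>g. g \<in> carrier G \<Longrightarrow> AE p in M \<Otimes>\<^sub>M M.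
      B g (fst p) / B g (snd p) = \<gamma> g * F p / F (diag_action \<sigma> (inv g) p)"
  obtains k1 k2 where "k1 \<in> borel_measurable M" and "k2 \<in> borel_measurable M"
    and "\<And>x. x \<in> space M \<Longrightarrow> cmod (k1 x) = 1" and "\<And>y. y \<in> space M \<Longrightarrow> cmod (k2 y) = 1"
    and "AE p in M \<Otimes>\<^sub>M M. F p = k1 (fst p) * k2 (snd p)"
proof -
  interpret group G by fact
  interpret prob_space M by (rule pmp_actionD(1)[OF pmp])
  note pmp2 = pmp_action_diag[OF pmp]
  have F_nz: "F p \<noteq> 0" if "p \<in> space (M \<Otimes>\<^sub>M M)" for p using F_1[OF that] by auto
  have B_nz: "B g x \<noteq> 0" if "g \<in> carrier G" "x \<in> space M" for g x using B_1[OF that] by auto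
  \<comment> \<open>The character and the transfer function cancel in the cross ratio of F, which is therefore
    invariant, hence constant by weak mixing of the diagonal action.\<close>
  have "AE P in (M \<Otimes>\<^sub>M M) \<Otimes>\<^sub>M (M \<Otimes>\<^sub>M M).
      cross_ratio F (diag_action (diag_action \<sigma>) h P) = cross_ratio F P" if h: "h \<in> carrier G" for h
  proof -
    have "AE p in M \<Otimes>\<^sub>M M. F (map_prod (\<sigma> h) (\<sigma> h) p)
        = \<gamma> (inv h) * inverse (B (inv h) (fst p)) * B (inv h) (snd p) * F p"
      using F_rel[OF inv_closed[OF h]] AE_space
    proof eventually_elim
      case (elim p)
      then have "F (map_prod (\<sigma> h) (\<sigma> h) p) \<noteq> 0" "\<gamma> (inv h) \<noteq> 0"
        using F_nz pmp_action_space[OF pmp2 h] \<gamma>_1[OF inv_closed[OF h]]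
        by (auto simp: diag_action_eq_map_prod)
      with elim h show ?case
        using B_nz[of "inv h"] by (auto simp: diag_action_eq_map_prod space_pair_measure field_simps)
    qed
    moreover have "\<gamma> (inv h) \<noteq> 0" using \<gamma>_1[OF inv_closed[OF h]] by auto
    ultimately show ?thesis
      unfolding diag_action_eq_map_prod
      using B_nz[OF inv_closed[OF h]]
      by (intro cross_ratio_AE_invariant[OF prob_space_axioms prob_space_axioms F_nz,
            where u="\<lambda>x. inverse (B (inv h) x)" and v="B (inv h)"]) auto
  qed
  moreover have "cross_ratio F \<in> borel_measurable ((M \<Otimes>\<^sub>M M) \<Otimes>\<^sub>M (M \<Otimes>\<^sub>M M))"
    unfolding cross_ratio_def by measurable
  ultimately obtain \<kappa> where "AE P in (M \<Otimes>\<^sub>M M) \<Otimes>\<^sub>M (M \<Otimes>\<^sub>M M). cross_ratio F P = \<kappa>"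
    using ergodic_invariant_AE_const[OF G cG pmp_action_diag[OF pmp2] wm[unfolded weakly_mixing_def],
        of "cross_ratio F"] by blast
  then show ?thesis
    using AE_split_if_cross_ratio_AE_const[OF prob_space_axioms prob_space_axioms F_meas F_1] that
    by blast
qed

lemma transfer_cohomologous_to_constants:
  fixes G (structure)
    and B :: "'g \<Rightarrow> 'x \<Rightarrow> complex"
  assumes G: "group G" and cG: "countable (carrier G)" and pmp: "pmp_action G M \<sigma>"
    and wm: "weakly_mixing G (M \<Otimes>\<^sub>M M) (diag_action \<sigma>)"
    and sr: "T_cocycle_superrigid G (M \<Otimes>\<^sub>M M) (diag_action \<sigma>)"
    and B_meas: "\<And>g. g \<in> carrier G \<Longrightarrow> B g \<in> borel_measurable M"
    and B_1: "\<And>g x. g \<in> carrier G \<Longrightarrow> x \<in> space M \<Longrightarrow> cmod (B g x) = 1"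
    and cocycle: "\<And>g h. g \<in> carrier G \<Longrightarrow> h \<in> carrier G \<Longrightarrow>
      AE x in M. B (g \<otimes>\<^bsub>G\<^esub> h) x = c g h * B h (\<sigma> (inv\<^bsub>G\<^esub> g) x) * B g x"
    and c_nz: "\<And>g h. g \<in> carrier G \<Longrightarrow> h \<in> carrier G \<Longrightarrow> c g h \<noteq> 0"
  obtains k \<mu> where "\<And>x. x \<in> space M \<Longrightarrow> k x \<noteq> 0" and "\<And>g. g \<in> carrier G \<Longrightarrow> cmod (\<mu> g) = 1"
    and "\<And>g. g \<in> carrier G \<Longrightarrow> AE x in M. B g x = \<mu> g * k x / k (\<sigma> (inv\<^bsub>G\<^esub> g) x)"
proof -
  interpret group G by fact
  interpret prob_space M by (rule pmp_actionD(1)[OF pmp])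
  note pmp2 = pmp_action_diag[OF pmp]
  obtain \<gamma> F where \<gamma>_1: "\<And>g. g \<in> carrier G \<Longrightarrow> cmod (\<gamma> g) = 1"
    and F_meas[measurable]: "F \<in> borel_measurable (M \<Otimes>\<^sub>M M)"
    and F_1: "\<And>p. p \<in> space (M \<Otimes>\<^sub>M M) \<Longrightarrow> cmod (F p) = 1"
    and F_rel: "\<And>g. g \<in> carrier G \<Longrightarrow> AE p in M \<Otimes>\<^sub>M M.
      B g (fst p) / B g (snd p) = \<gamma> g * F p / F (diag_action \<sigma> (inv g) p)"
    using diag_ratio_untwisted[OF G pmp sr B_meas B_1 cocycle c_nz] by blast
  obtain k1 k2 where [measurable]: "k1 \<in> borel_measurable M" "k2 \<in> borel_measurable M"
    and k1_1: "\<And>x. x \<in> space M \<Longrightarrow> cmod (k1 x) = 1" and k2_1: "\<And>y. y \<in> space M \<Longrightarrow> cmod (k2 y) = 1"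
    and F_split: "AE p in M \<Otimes>\<^sub>M M. F p = k1 (fst p) * k2 (snd p)"
    using transfer_function_AE_split[OF G cG pmp wm B_1 \<gamma>_1 F_meas F_1 F_rel] by blast
  have "\<exists>m. cmod m = 1 \<and> (AE x in M. B g x = m * k1 x / k1 (\<sigma> (inv g) x))"
    if g: "g \<in> carrier G" for g
  proof (rule AE_coboundary_const_if_ratio_split[OF prob_space_axioms _ B_meas[OF g] _ _
        B_1[OF g] k1_1 k2_1 \<gamma>_1[OF g]])
    show "\<sigma> (inv g) \<in> M \<rightarrow>\<^sub>M M" using pmp_actionD(2)[OF pmp] g by simp
    have "AE p in M \<Otimes>\<^sub>M M. F (diag_action \<sigma> (inv g) p)
        = k1 (\<sigma> (inv g) (fst p)) * k2 (\<sigma> (inv g) (snd p))"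
      using AE_measure_preserving[OF pmp_actionD(2,3)[OF pmp2] F_split] g
      by (simp add: diag_action_def split_beta)
    with F_rel[OF g] F_split show "AE p in M \<Otimes>\<^sub>M M. B g (fst p) / B g (snd p)
        = \<gamma> g * (k1 (fst p) * k2 (snd p)) / (k1 (\<sigma> (inv g) (fst p)) * k2 (\<sigma> (inv g) (snd p)))"
    proof eventually_elim
      case (elim p)
      from elim(1) show ?case by (simp only: elim(2,3))
    qed
  qed measurable
  then have "\<forall>g\<in>carrier G. \<exists>m. cmod m = 1 \<and> (AE x in M. B g x = m * k1 x / k1 (\<sigma> (inv g) x))"
    by blast
  then obtain \<mu> where "\<forall>g\<in>carrier G. cmod (\<mu> g) = 1 \<and> (AE x in M. B g x = \<mu> g * k1 x / k1 (\<sigma> (inv g) x))"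
    by (rule bchoice_iff[THEN iffD1, elim_format]) blast
  moreover have "k1 x \<noteq> 0" if "x \<in> space M" for x using k1_1[OF that] by auto
  ultimately show ?thesis using that[of k1 \<mu>] by blast
qed

lemma Bg_2_if_transfer_cohomologous_to_constants:
  fixes G (structure)
    and B :: "'g \<Rightarrow> 'x \<Rightarrow> complex"
  assumes G: "group G" and pmp: "pmp_action G M \<sigma>" and b: "b \<in> Zg G 2"
    and cocycle: "\<And>g h. g \<in> carrier G \<Longrightarrow> h \<in> carrier G \<Longrightarrow>
      AE x in M. B (g \<otimes>\<^bsub>G\<^esub> h) x = b [g, h] * B h (\<sigma> (inv\<^bsub>G\<^esub> g) x) * B g x"
    and k_nz: "\<And>x. x \<in> space M \<Longrightarrow> k x \<noteq> 0" and \<mu>_1: "\<And>g. g \<in> carrier G \<Longrightarrow> cmod (\<mu> g) = 1"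
    and B_eq: "\<And>g. g \<in> carrier G \<Longrightarrow> AE x in M. B g x = \<mu> g * k x / k (\<sigma> (inv\<^bsub>G\<^esub> g) x)"
  shows "b \<in> Bg G 2"
proof -
  interpret group G by fact
  interpret prob_space M by (rule pmp_actionD(1)[OF pmp])
  have \<mu>_nz: "\<mu> g \<noteq> 0" if "g \<in> carrier G" for g using \<mu>_1[OF that] by auto
  have "b [g, h] = \<mu> (g \<otimes> h) / (\<mu> g * \<mu> h)" if g: "g \<in> carrier G" and h: "h \<in> carrier G" for g h
  proof -
    have "AE x in M. B h (\<sigma> (inv g) x) = \<mu> h * k (\<sigma> (inv g) x) / k (\<sigma> (inv h) (\<sigma> (inv g) x))"
      using pmp_actionD(2,3)[OF pmp] g by (intro AE_measure_preserving[OF _ _ B_eq[OF h]]) auto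
    from cocycle[OF g h] B_eq[OF g] B_eq[OF m_closed[OF g h]] this AE_space
    have "AE x in M. b [g, h] = \<mu> (g \<otimes> h) / (\<mu> g * \<mu> h)"
    proof eventually_elim
      case (elim x)
      have comp: "\<sigma> (inv h) (\<sigma> (inv g) x) = \<sigma> (inv (g \<otimes> h)) x"
        using pmp_actionD(5)[OF pmp, of "inv h" "inv g" x] g h elim(5) by (simp add: inv_mult_group)
      have nz: "k x \<noteq> 0" "k (\<sigma> (inv g) x) \<noteq> 0" "k (\<sigma> (inv (g \<otimes> h)) x) \<noteq> 0"
        using k_nz pmp_action_space[OF pmp] elim(5) g h by auto
      from elim(1-4) comp nz have "\<mu> (g \<otimes> h) * (k x / k (\<sigma> (inv (g \<otimes> h)) x))
          = (b [g, h] * \<mu> g * \<mu> h) * (k x / k (\<sigma> (inv (g \<otimes> h)) x))"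
        by (simp add: field_simps)
      moreover have "k x / k (\<sigma> (inv (g \<otimes> h)) x) \<noteq> 0" using nz by simp
      ultimately show ?case using \<mu>_nz g h by (simp add: field_simps)
    qed
    then show ?thesis by simp
  qed
  then show ?thesis unfolding Bg_def
  proof (simp add: b, intro exI[of _ "\<lambda>gs. inverse (\<mu> (hd gs))"] conjI ballI)
    fix gs assume "gs \<in> gtuples G (Suc 0)"
    then show "cmod (inverse (\<mu> (hd gs))) = 1" using \<mu>_1 by (auto simp: gtuples_1 norm_inverse)
  next
    fix gs assume "gs \<in> gtuples G 2"
    then obtain g h where "g \<in> carrier G" "h \<in> carrier G" "gs = [g, h]" by (auto simp: gtuples_2)
    with \<open>\<And>g h. _ \<Longrightarrow> _ \<Longrightarrow> b [g, h] = _\<close> show "b gs = dG G (\<lambda>gs. inverse (\<mu> (hd gs))) gs"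
      by (simp add: dG_2 field_simps)
  qed
qed

lemma Bg_2_if_lift_cochain_cohomologous_trivial:
  fixes G (structure)
  assumes G: "group G" and cG: "countable (carrier G)" and pmp: "pmp_action G M \<sigma>"
    and wm: "weakly_mixing G (M \<Otimes>\<^sub>M M) (diag_action \<sigma>)"
    and sr: "T_cocycle_superrigid G (M \<Otimes>\<^sub>M M) (diag_action \<sigma>)"
    and b: "b \<in> Zg G 2" and coh: "cohomologous G M \<sigma> 2 (lift_cochain b) (\<lambda>_ _. 1)"
  shows "b \<in> Bg G 2"
proof -
  interpret group G by fact
  from coh obtain \<beta> where \<beta>: "meas_cochain G M 1 \<beta>"
      and rel: "\<forall>gs\<in>gtuples G 2. AE x in M. b gs * dA G \<sigma> \<beta> gs x = 1"
    by (auto simp: cohomologous_def)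
  define B where "B g = \<beta> [g]" for g
  have B_meas: "B g \<in> borel_measurable M" and B_1: "\<And>x. x \<in> space M \<Longrightarrow> cmod (B g x) = 1"
    if "g \<in> carrier G" for g
    using \<beta> that by (auto simp: B_def meas_cochain_def gtuples_1)
  have b_nz: "b [g, h] \<noteq> 0" if "g \<in> carrier G" "h \<in> carrier G" for g h
    using b that by (fastforce simp: Zg_def gtuples_2)
  have cocycle: "AE x in M. B (g \<otimes> h) x = b [g, h] * B h (\<sigma> (inv g) x) * B g x"
    if g: "g \<in> carrier G" and h: "h \<in> carrier G" for g h
  proof -
    have "AE x in M. b [g, h] * dA G \<sigma> \<beta> [g, h] x = 1" using rel g h by (auto simp: gtuples_2)
    then show ?thesis
      using AE_space
    proof eventually_elim
      case (elim x)
      have "B (g \<otimes> h) x \<noteq> 0" using B_1[OF m_closed[OF g h] elim(2)] by auto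
      with elim(1) show ?case by (simp add: dA_2 B_def field_simps)
    qed
  qed
  obtain k \<mu> where "\<And>x. x \<in> space M \<Longrightarrow> k x \<noteq> 0" and "\<And>g. g \<in> carrier G \<Longrightarrow> cmod (\<mu> g) = 1"
    and "\<And>g. g \<in> carrier G \<Longrightarrow> AE x in M. B g x = \<mu> g * k x / k (\<sigma> (inv g) x)"
    using transfer_cohomologous_to_constants[OF G cG pmp wm sr B_meas B_1 cocycle b_nz] by blast
  then show ?thesis using Bg_2_if_transfer_cohomologous_to_constants[OF G pmp b cocycle] by blast
qed

theorem lemma2:
  fixes G :: "('g, 'b) monoid_scheme"
    and M :: "'x::polish_space measure"
    and \<sigma> :: "'g \<Rightarrow> 'x \<Rightarrow> 'x"
  assumes "group G"
    and "countable (carrier G)"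
    and "sets M = sets borel"
    and "pmp_action G M \<sigma>"
  shows "\<forall>n::nat. \<exists>\<Psi>.
           \<Psi> \<in> hom (Hgrp G n) (Hact G M \<sigma> n) \<and>
           (\<forall>c\<in>Zg G n. \<Psi> (Hclass G n c) = Haclass G M \<sigma> n (\<lambda>gs x. c gs)) \<and>
           (n = 1 \<and> weakly_mixing G M \<sigma> \<longrightarrow> inj_on \<Psi> (carrier (Hgrp G n))) \<and>
           (n = 2 \<and> weakly_mixing G (M \<Otimes>\<^sub>M M) (diag_action \<sigma>)
                  \<and> T_cocycle_superrigid G (M \<Otimes>\<^sub>M M) (diag_action \<sigma>)
              \<longrightarrow> inj_on \<Psi> (carrier (Hgrp G n)))"
proof
  fix n :: nat
  obtain \<Psi> where hom: "\<Psi> \<in> hom (Hgrp G n) (Hact G M \<sigma> n)"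
    and \<Psi>: "\<forall>c\<in>Zg G n. \<Psi> (Hclass G n c) = Haclass G M \<sigma> n (lift_cochain c)"
    using lift_cochain_induces_hom by blast
  have inj: "inj_on \<Psi> (carrier (Hgrp G n))"
    if reflect: "\<And>b. b \<in> Zg G n \<Longrightarrow> cohomologous G M \<sigma> n (lift_cochain b) (\<lambda>_ _. 1) \<Longrightarrow> b \<in> Bg G n"
  proof (rule inj_onI)
    fix X Y assume "X \<in> carrier (Hgrp G n)" "Y \<in> carrier (Hgrp G n)" "\<Psi> X = \<Psi> Y"
    then obtain c c' where "c \<in> Zg G n" "c' \<in> Zg G n" "X = Hclass G n c" "Y = Hclass G n c'"
      and "Haclass G M \<sigma> n (lift_cochain c) = Haclass G M \<sigma> n (lift_cochain c')"
      using \<Psi> by (auto simp: carrier_Hgrp)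
    then show "X = Y" using Hclass_eq_if_Haclass_eq[OF reflect] by simp
  qed
  show "\<exists>\<Psi>. \<Psi> \<in> hom (Hgrp G n) (Hact G M \<sigma> n) \<and>
           (\<forall>c\<in>Zg G n. \<Psi> (Hclass G n c) = Haclass G M \<sigma> n (\<lambda>gs x. c gs)) \<and>
           (n = 1 \<and> weakly_mixing G M \<sigma> \<longrightarrow> inj_on \<Psi> (carrier (Hgrp G n))) \<and>
           (n = 2 \<and> weakly_mixing G (M \<Otimes>\<^sub>M M) (diag_action \<sigma>)
                  \<and> T_cocycle_superrigid G (M \<Otimes>\<^sub>M M) (diag_action \<sigma>)
              \<longrightarrow> inj_on \<Psi> (carrier (Hgrp G n)))"
    using hom \<Psi> inj Bg_1_if_lift_cochain_cohomologous_trivial[OF assms(1,2,4)]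
      Bg_2_if_lift_cochain_cohomologous_trivial[OF assms(1,2,4)]
    by auto
qed

end
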